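(* Let $A$ be a unital $C^*$-algebra and let $a,b\in A$ be self-adjoint. Then $a=b$ if and only if $\rho(a,b)=0$.
   Context: For $a,b\in A$ and $n\geq 0$ put $C_{a,b}^n\mathbf 1=\sum_{k=0}^n(-1)^k\binom{n}{k}a^{n-k}b^k$ (with $a^0=b^0=\mathbf 1$), and $\rho(a,b)=\limsup_{n\to\infty}\|C_{a,b}^n\mathbf 1\|^{1/n}$. *)

theory Defs
  imports "HOL-Analysis.Analysis"
begin

text \<open>Unital C*-algebras: a real Banach algebra with unit (norm 1 = 1), equipped with a
  complex scalar multiplication compatible with the real one, and an involution satisfying
  the C*-identity.\<close>

class cstar_algebra_1 = real_normed_algebra_1 + banach +
  fixes cscale :: "complex \<Rightarrow> 'a \<Rightarrow> 'a"
    and adj :: "'a \<Rightarrow> 'a"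
  assumes cscale_of_real: "cscale (of_real r) x = scaleR r x"
    and cscale_add_left: "cscale (c + d) x = cscale c x + cscale d x"
    and cscale_add_right: "cscale c (x + y) = cscale c x + cscale c y"
    and cscale_cscale: "cscale c (cscale d x) = cscale (c * d) x"
    and cscale_mult_left: "cscale c (x * y) = cscale c x * y"
    and cscale_mult_right: "cscale c (x * y) = x * cscale c y"
    and norm_cscale: "norm (cscale c x) = cmod c * norm x"
    and adj_adj: "adj (adj x) = x"
    and adj_add: "adj (x + y) = adj x + adj y"
    and adj_cscale: "adj (cscale c x) = cscale (cnj c) (adj x)"
    and adj_mult: "adj (x * y) = adj y * adj x"
    and cstar_identity: "norm (adj x * x) = (norm x)\<^sup>2"

definition selfadjoint :: "'a::cstar_algebra_1 \<Rightarrow> bool" where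
  "selfadjoint a \<longleftrightarrow> adj a = a"

definition Cpow :: "'a::cstar_algebra_1 \<Rightarrow> 'a \<Rightarrow> nat \<Rightarrow> 'a" where
  "Cpow a b n = (\<Sum>k\<le>n. ((-1) ^ k * of_nat (n choose k)) * a ^ (n - k) * b ^ k)"

definition rho :: "'a::cstar_algebra_1 \<Rightarrow> 'a \<Rightarrow> ereal" where
  "rho a b = limsup (\<lambda>n. ereal (root n (norm (Cpow a b n))))"

end

theory Submission
  imports Defs "HOL-Library.Real_Mod"
begin

text \<open>
  If \<open>a = b\<close>, every \<open>C\<^sup>n(a, a)\<close> with \<open>n \<ge> 1\<close> vanishes. Conversely, for self-adjoint \<open>a\<close> and \<open>b\<close>
  the function \<open>f(t) = exp(i t a) exp(-i t b)\<close> is unitary for real \<open>t\<close>, and its Taylor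
  coefficients are \<open>i\<^sup>n C\<^sup>n(a, b) / n!\<close>. If \<open>\<rho>(a,b) = 0\<close> then \<open>\<parallel>C\<^sup>n(a, b)\<parallel> \<le> \<epsilon>\<^sup>n\<close> for \<open>n > N\<close>, so on
  \<open>|t| \<le> R = N/(4\<epsilon>)\<close> the Taylor polynomial of degree \<open>N\<close> stays within \<open>4\<close> of \<open>f\<close> and is
  bounded by \<open>5\<close>. Bernstein's inequality at the centre of \<open>[-R, R]\<close> bounds its linear
  coefficient \<open>i(a - b)\<close> by \<open>8N \<cdot> 5 / R = 160\<epsilon>\<close>.

  For polynomials with coefficients in a C*-algebra, Bernstein's inequality follows from the
  Cauchy estimate on the disc of radius \<open>R/(4N)\<close>, where the polynomial is bounded by twice
  its supremum on \<open>[-R, R]\<close>: the substitution \<open>z = R(w + w\<^sup>-\<^sup>1)/2\<close> maps the unit circle onto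
  \<open>[-R, R]\<close> and turns \<open>w\<^sup>N P(z)\<close> into a polynomial in \<open>w\<close>, which the maximum principle
  bounds on the unit disc by its supremum on the circle.
\<close>

section \<open>Complex scalars and the involution\<close>

lemma cscale_zero_left [simp]: "cscale 0 x = (0::'a::cstar_algebra_1)"
  using cscale_of_real[of 0 x] by simp

lemma cscale_one [simp]: "cscale 1 x = (x::'a::cstar_algebra_1)"
  using cscale_of_real[of 1 x] by simp

lemma cscale_zero_right [simp]: "cscale c 0 = (0::'a::cstar_algebra_1)"
  using cscale_add_right[of c 0 0] by simp

lemma cscale_minus_left: "cscale (- c) x = - cscale c (x::'a::cstar_algebra_1)"
  using cscale_add_left[of c "- c" x] by (simp add: eq_neg_iff_add_eq_0 add.commute)

lemma cscale_diff_left: "cscale (c - d) x = cscale c x - cscale d (x::'a::cstar_algebra_1)"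
  using cscale_add_left[of c "- d" x] by (simp add: cscale_minus_left)

lemma cscale_sum_left: "cscale (sum f A) x = (\<Sum>i\<in>A. cscale (f i) (x::'a::cstar_algebra_1))"
  by (induction A rule: infinite_finite_induct) (auto simp: cscale_add_left)

lemma cscale_sum_right: "cscale c (sum f A) = (\<Sum>i\<in>A. cscale c (f i::'a::cstar_algebra_1))"
  by (induction A rule: infinite_finite_induct) (auto simp: cscale_add_right)

lemma cscale_mult_cscale: "cscale c x * cscale d y = cscale (c * d) (x * (y::'a::cstar_algebra_1))"
  by (metis cscale_mult_left cscale_mult_right cscale_cscale)

lemma cscale_power: "cscale c x ^ n = cscale (c ^ n) ((x::'a::cstar_algebra_1) ^ n)"
  by (induction n) (simp_all add: cscale_mult_cscale)

lemma of_real_mult_eq_cscale: "of_real r * x = cscale (of_real r) (x::'a::cstar_algebra_1)"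
  by (simp add: cscale_of_real scaleR_conv_of_real)

lemma adj_one [simp]: "adj 1 = (1::'a::cstar_algebra_1)"
  by (metis adj_adj adj_mult mult.right_neutral)

lemma adj_scaleR: "adj (r *\<^sub>R x) = r *\<^sub>R adj (x::'a::cstar_algebra_1)"
  by (metis adj_cscale complex_cnj_complex_of_real cscale_of_real)

lemma norm_adj [simp]: "norm (adj x) = norm (x::'a::cstar_algebra_1)"
proof -
  have le: "norm y \<le> norm (adj y)" for y :: 'a
  proof (cases "y = 0")
    case False
    have "(norm y)\<^sup>2 = norm (adj y * y)" by (simp add: cstar_identity)
    also have "\<dots> \<le> norm (adj y) * norm y" by (rule norm_mult_ineq)
    finally show ?thesis using False by (simp add: power2_eq_square)
  qed simp
  show ?thesis using le[of x] le[of "adj x"] by (simp add: adj_adj)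
qed

lemma bounded_linear_adj: "bounded_linear (adj :: 'a::cstar_algebra_1 \<Rightarrow> 'a)"
  by (rule bounded_linear_intro[where K = 1]) (auto simp: adj_add adj_scaleR)

lemma adj_power: "adj (x ^ n) = adj (x::'a::cstar_algebra_1) ^ n"
  by (induction n) (auto simp: adj_mult power_commutes)

lemma adj_exp: "adj (exp x) = exp (adj (x::'a::cstar_algebra_1))"
proof -
  have "(\<lambda>n. adj (x ^ n /\<^sub>R fact n)) sums adj (exp x)"
    by (rule bounded_linear.sums[OF bounded_linear_adj exp_converges])
  then have "(\<lambda>n. adj x ^ n /\<^sub>R fact n) sums adj (exp x)"
    by (simp add: adj_scaleR adj_power)
  then show ?thesis
    using exp_converges sums_unique2 by blast
qed

lemma adj_exp_mult_exp_skew: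
  assumes "adj x = - (x::'a::cstar_algebra_1)"
  shows "adj (exp x) * exp x = 1"
  using exp_minus_inverse[of "- x"] by (simp add: adj_exp assms)

lemma norm_isometry_mult:
  assumes "adj u * u = 1" and "adj v * v = (1::'a::cstar_algebra_1)"
  shows "norm (u * v) = 1"
proof -
  have "adj (u * v) * (u * v) = adj v * (adj u * u) * v"
    by (simp add: adj_mult mult.assoc)
  also have "\<dots> = 1" using assms by simp
  finally have "(norm (u * v))\<^sup>2 = 1"
    using cstar_identity[of "u * v"] by simp
  then show ?thesis
    using norm_ge_zero[of "u * v"] by (auto simp: power2_eq_1_iff)
qed

lemma norm_exp_mult_exp_skew:
  assumes "adj x = - x" and "adj y = - (y::'a::cstar_algebra_1)"
  shows "norm (exp x * exp y) = 1"
  using assms by (intro norm_isometry_mult adj_exp_mult_exp_skew)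

lemma adj_cscale_imaginary_selfadjoint:
  assumes "selfadjoint a" and "cnj c = - c"
  shows "adj (cscale c a) = - cscale c a"
  using assms by (simp add: selfadjoint_def adj_cscale cscale_minus_left)

section \<open>The binomial differences \<open>C\<^sup>n(a, b)\<close>\<close>

lemma Cpow_self:
  assumes "1 \<le> n"
  shows "Cpow a a n = (0::'a::cstar_algebra_1)"
proof -
  have "Cpow a a n = (\<Sum>k\<le>n. (-1) ^ k * of_nat (n choose k)) * a ^ n"
    unfolding Cpow_def sum_distrib_right
    by (intro sum.cong refl) (auto simp: mult.assoc simp flip: power_add)
  also have "(\<Sum>k\<le>n. (-1) ^ k * of_nat (n choose k)) = (of_real (\<Sum>k\<le>n. (-1) ^ k * real (n choose k)) :: 'a)"
    by simp
  also have "(\<Sum>k\<le>n. (-1) ^ k * real (n choose k)) = 0"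
    using assms by (intro choose_alternating_sum) simp
  finally show ?thesis
    by simp
qed

lemma Cpow_1: "Cpow a b 1 = a - (b::'a::cstar_algebra_1)"
  by (simp add: Cpow_def)

lemma rho_self: "rho a a = 0"
proof -
  have "(\<lambda>n. ereal (root n (norm (Cpow a a n)))) = (\<lambda>n. 0)"
  proof
    fix n
    show "ereal (root n (norm (Cpow a a n))) = 0"
      by (cases "n = 0") (simp_all add: Cpow_self)
  qed
  then show ?thesis
    by (simp add: rho_def Limsup_const)
qed

lemma Cpow_eq_sum_cscale:
  "Cpow a b n = (\<Sum>i\<le>n. cscale ((-1) ^ (n - i) * of_nat (n choose i)) (a ^ i * (b::'a::cstar_algebra_1) ^ (n - i)))"
proof -
  have "Cpow a b n = (\<Sum>k\<le>n. cscale ((-1) ^ k * of_nat (n choose k)) (a ^ (n - k) * b ^ k))"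
    unfolding Cpow_def
  proof (intro sum.cong refl)
    fix k
    have "(-1) ^ k * of_nat (n choose k) * a ^ (n - k) * b ^ k
        = of_real ((-1) ^ k * real (n choose k)) * (a ^ (n - k) * b ^ k)"
      by (simp add: mult.assoc)
    also have "\<dots> = cscale ((-1) ^ k * of_nat (n choose k)) (a ^ (n - k) * b ^ k)"
      unfolding of_real_mult_eq_cscale by simp
    finally show "(-1) ^ k * of_nat (n choose k) * a ^ (n - k) * b ^ k
        = cscale ((-1) ^ k * of_nat (n choose k)) (a ^ (n - k) * b ^ k)" .
  qed
  also have "\<dots> = (\<Sum>i\<le>n. cscale ((-1) ^ (n - i) * of_nat (n choose (n - i))) (a ^ i * b ^ (n - i)))"
    by (rule sum.reindex_bij_witness[of _ "\<lambda>i. n - i" "\<lambda>i. n - i"]) auto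
  also have "\<dots> = (\<Sum>i\<le>n. cscale ((-1) ^ (n - i) * of_nat (n choose i)) (a ^ i * b ^ (n - i)))"
    by (intro sum.cong refl) (simp add: binomial_symmetric[symmetric])
  finally show ?thesis .
qed

lemma binomial_coeff_div_fact:
  assumes "i \<le> n"
  shows "c ^ n / fact n * ((-1) ^ (n - i) * of_nat (n choose i))
       = c ^ i * (- c) ^ (n - i) / (fact i * fact (n - i) :: 'b::field_char_0)"
proof -
  have "c ^ n = c ^ i * c ^ (n - i)"
    using assms by (simp add: power_add[symmetric])
  moreover have "(of_nat (n choose i) :: 'b) = fact n / (fact i * fact (n - i))"
    using assms by (simp add: binomial_fact)
  ultimately show ?thesis
    by (simp add: power_minus[of c] field_simps)
qed

lemma exp_cscale_mult_exp_cscale_sums: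
  fixes a b :: "'a::cstar_algebra_1"
  shows "(\<lambda>n. cscale (c ^ n / fact n) (Cpow a b n)) sums (exp (cscale c a) * exp (cscale (- c) b))"
proof -
  let ?x = "cscale c a" and ?y = "cscale (- c) b"
  have "(\<lambda>n. \<Sum>i\<le>n. (?x ^ i /\<^sub>R fact i) * (?y ^ (n - i) /\<^sub>R fact (n - i))) sums
        ((\<Sum>n. ?x ^ n /\<^sub>R fact n) * (\<Sum>n. ?y ^ n /\<^sub>R fact n))"
    by (rule Cauchy_product_sums) (rule summable_norm_exp)+
  moreover have "(\<Sum>i\<le>n. (?x ^ i /\<^sub>R fact i) * (?y ^ (n - i) /\<^sub>R fact (n - i)))
      = cscale (c ^ n / fact n) (Cpow a b n)" for n
    unfolding Cpow_eq_sum_cscale cscale_sum_right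
  proof (intro sum.cong refl)
    fix i assume "i \<in> {..n}"
    then have i: "i \<le> n" by simp
    have "(?x ^ i /\<^sub>R fact i) * (?y ^ (n - i) /\<^sub>R fact (n - i))
      = cscale (c ^ i * (- c) ^ (n - i) / (fact i * fact (n - i))) (a ^ i * b ^ (n - i))"
      by (simp add: cscale_cscale cscale_power cscale_mult_cscale cscale_of_real[symmetric]
          divide_inverse mult_ac)
    also have "\<dots> = cscale (c ^ n / fact n) (cscale ((-1) ^ (n - i) * of_nat (n choose i)) (a ^ i * b ^ (n - i)))"
      by (simp only: cscale_cscale binomial_coeff_div_fact[OF i])
    finally show "(?x ^ i /\<^sub>R fact i) * (?y ^ (n - i) /\<^sub>R fact (n - i))
      = cscale (c ^ n / fact n) (cscale ((-1) ^ (n - i) * of_nat (n choose i)) (a ^ i * b ^ (n - i)))" .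
  qed
  ultimately show ?thesis
    by (simp add: exp_def)
qed

section \<open>Roots of unity and the Cauchy estimate\<close>

definition root_unity :: "nat \<Rightarrow> nat \<Rightarrow> complex" where
  "root_unity M k = cis (2 * pi * real k / real M)"

lemma norm_root_unity [simp]: "cmod (root_unity M k) = 1"
  by (simp add: root_unity_def)

lemma root_unity_power_mult_cnj_power:
  "root_unity M k ^ i * cnj (root_unity M k) ^ j = cis (2 * pi * (real i - real j) / real M) ^ k"
  unfolding root_unity_def cis_cnj Complex.DeMoivre cis_mult
  by (simp add: field_simps diff_divide_distrib)

lemma sum_root_unity_orthogonal:
  assumes "i < M" and "j < M"
  shows "(\<Sum>k<M. root_unity M k ^ i * cnj (root_unity M k) ^ j) = (if i = j then of_nat M else 0)"
proof (cases "i = j")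
  case False
  define q where "q = cis (2 * pi * (real i - real j) / real M)"
  have "q \<noteq> 1"
  proof
    assume "q = 1"
    then obtain n :: int where "2 * pi * (real i - real j) / real M = of_int n * (2 * pi)"
      by (auto simp: q_def cis_eq_1_iff)
    then have "2 * pi * (real i - real j - of_int n * real M) = 0"
      using assms by (simp add: field_simps)
    then have n: "real i - real j = of_int n * real M"
      by simp
    moreover have "\<bar>real i - real j\<bar> < real M"
      using assms by auto
    ultimately have "\<bar>n\<bar> < 1"
      using assms by (simp add: abs_mult)
    then have "n = 0" by simp
    with n False show False by simp
  qed
  moreover have "q ^ M = 1"
  proof -
    have "q ^ M = cis (2 * pi * of_int (int i - int j))"
      using assms unfolding q_def Complex.DeMoivre by simp
    then show ?thesis by simp
  qed
  ultimately show ?thesis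
    using False by (simp add: root_unity_power_mult_cnj_power geometric_sum flip: q_def)
qed (simp add: root_unity_power_mult_cnj_power)

definition vpoly :: "(nat \<Rightarrow> 'a::cstar_algebra_1) \<Rightarrow> nat \<Rightarrow> complex \<Rightarrow> 'a" where
  "vpoly c N z = (\<Sum>n\<le>N. cscale (z ^ n) (c n))"

lemma vpoly_coeff_eq_root_unity_average:
  assumes "m \<le> N" and "N < M"
  shows "cscale (z ^ m) (c m)
       = (\<Sum>k<M. cscale (cnj (root_unity M k) ^ m / of_nat M) (vpoly c N (z * root_unity M k)))"
proof -
  have "(\<Sum>k<M. cscale (cnj (root_unity M k) ^ m / of_nat M) (vpoly c N (z * root_unity M k)))
      = (\<Sum>n\<le>N. cscale (z ^ n / of_nat M * (\<Sum>k<M. root_unity M k ^ n * cnj (root_unity M k) ^ m)) (c n))"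
    by (simp add: vpoly_def cscale_sum_right cscale_sum_left cscale_cscale sum_distrib_left
        power_mult_distrib mult_ac sum.swap[of _ "{..<M}"])
  also have "\<dots> = (\<Sum>n\<le>N. if n = m then cscale (z ^ m) (c m) else 0)"
    using assms by (intro sum.cong refl) (simp add: sum_root_unity_orthogonal)
  also have "\<dots> = cscale (z ^ m) (c m)"
    using assms by simp
  finally show ?thesis ..
qed

lemma norm_vpoly_coeff_le:
  assumes "m \<le> N" and bound: "\<And>\<zeta>. cmod \<zeta> = 1 \<Longrightarrow> norm (vpoly c N (z * \<zeta>)) \<le> B"
  shows "cmod z ^ m * norm (c m) \<le> B"
proof -
  let ?M = "Suc N"
  have "cmod z ^ m * norm (c m) = norm (cscale (z ^ m) (c m))"
    by (simp add: norm_cscale norm_power)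
  also have "\<dots> = norm (\<Sum>k<?M. cscale (cnj (root_unity ?M k) ^ m / of_nat ?M) (vpoly c N (z * root_unity ?M k)))"
    unfolding vpoly_coeff_eq_root_unity_average[OF assms(1) lessI] ..
  also have "\<dots> \<le> (\<Sum>k<?M. B / real ?M)"
    by (intro order.trans[OF norm_sum] sum_mono)
       (simp add: norm_cscale norm_divide norm_power divide_right_mono bound del: of_nat_Suc)
  also have "\<dots> = B"
    by simp
  finally show ?thesis .
qed

section \<open>A maximum principle on the unit disc\<close>

text \<open>
  The Poisson kernel \<open>(1 - |w|\<^sup>2) / |1 - cnj w \<cdot> \<zeta>|\<^sup>2\<close> of the unit disc at \<open>w\<close>, with the geometric
  series truncated after \<open>L\<close> terms and \<open>\<zeta>\<close> running through the \<open>(2L+1)\<close>-st roots of unity.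
\<close>

definition disc_kernel :: "nat \<Rightarrow> complex \<Rightarrow> nat \<Rightarrow> real" where
  "disc_kernel L w k = (1 - (cmod w)\<^sup>2) * (cmod (\<Sum>i\<le>L. (cnj w * root_unity (2 * L + 1) k) ^ i))\<^sup>2"

lemma disc_kernel_nonneg: "cmod w \<le> 1 \<Longrightarrow> 0 \<le> disc_kernel L w k"
  by (simp add: disc_kernel_def abs_square_le_1)

lemma disc_kernel_eq_double_sum:
  "of_real (disc_kernel L w k) = (1 - of_real ((cmod w)\<^sup>2)) *
     (\<Sum>i\<le>L. \<Sum>j\<le>L. cnj w ^ i * w ^ j * (root_unity (2 * L + 1) k ^ i * cnj (root_unity (2 * L + 1) k) ^ j))"
proof -
  let ?\<zeta> = "root_unity (2 * L + 1) k"
  have "of_real ((cmod (\<Sum>i\<le>L. (cnj w * ?\<zeta>) ^ i))\<^sup>2)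
      = (\<Sum>i\<le>L. (cnj w * ?\<zeta>) ^ i) * cnj (\<Sum>j\<le>L. (cnj w * ?\<zeta>) ^ j)"
    unfolding complex_norm_square ..
  also have "\<dots> = (\<Sum>i\<le>L. \<Sum>j\<le>L. cnj w ^ i * w ^ j * (?\<zeta> ^ i * cnj ?\<zeta> ^ j))"
    by (simp add: sum_product power_mult_distrib mult_ac) (rule sum.swap)
  finally show ?thesis
    by (simp add: disc_kernel_def)
qed

lemma disc_kernel_moment:
  assumes "f \<le> L"
  shows "(\<Sum>k<2 * L + 1. root_unity (2 * L + 1) k ^ f * of_real (disc_kernel L w k))
       = of_nat (2 * L + 1) * w ^ f * (1 - of_real ((cmod w)\<^sup>2) ^ Suc (L - f))"
proof -
  define M where "M = 2 * L + 1"
  define \<zeta> where "\<zeta> k = root_unity M k" for k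
  define q where "q = (of_real ((cmod w)\<^sup>2) :: complex)"
  have q: "q = cnj w * w"
    unfolding q_def complex_norm_square by (rule mult.commute)
  have "of_real (disc_kernel L w k)
      = (1 - q) * (\<Sum>i\<le>L. \<Sum>j\<le>L. cnj w ^ i * w ^ j * (\<zeta> k ^ i * cnj (\<zeta> k) ^ j))" for k
    unfolding q_def \<zeta>_def M_def by (rule disc_kernel_eq_double_sum)
  then have "(\<Sum>k<M. \<zeta> k ^ f * of_real (disc_kernel L w k))
      = (1 - q) * (\<Sum>i\<le>L. \<Sum>j\<le>L. cnj w ^ i * w ^ j * (\<Sum>k<M. \<zeta> k ^ (f + i) * cnj (\<zeta> k) ^ j))"
    by (simp add: sum_distrib_left power_add mult_ac sum.swap[of _ "{..<M}"])
  also have "\<dots> = (1 - q) * (\<Sum>i\<le>L. if f + i \<le> L then of_nat M * cnj w ^ i * w ^ (f + i) else 0)"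
  proof (intro arg_cong[where f = "(*) (1 - q)"] sum.cong refl)
    fix i assume "i \<in> {..L}"
    then have "f + i < M" and "\<And>j. j \<le> L \<Longrightarrow> j < M"
      using assms by (auto simp: M_def)
    then have "(\<Sum>j\<le>L. cnj w ^ i * w ^ j * (\<Sum>k<M. \<zeta> k ^ (f + i) * cnj (\<zeta> k) ^ j))
        = (\<Sum>j\<le>L. if j = f + i then cnj w ^ i * w ^ j * of_nat M else 0)"
      by (intro sum.cong refl) (auto simp: \<zeta>_def sum_root_unity_orthogonal)
    then show "(\<Sum>j\<le>L. cnj w ^ i * w ^ j * (\<Sum>k<M. \<zeta> k ^ (f + i) * cnj (\<zeta> k) ^ j))
        = (if f + i \<le> L then of_nat M * cnj w ^ i * w ^ (f + i) else 0)"
      by (simp add: sum.delta' mult_ac)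
  qed
  also have "(\<Sum>i\<le>L. if f + i \<le> L then of_nat M * cnj w ^ i * w ^ (f + i) else 0)
      = (\<Sum>i\<in>{i\<in>{..L}. f + i \<le> L}. of_nat M * cnj w ^ i * w ^ (f + i))"
    by (rule sum.inter_filter[symmetric]) simp
  also have "{i\<in>{..L}. f + i \<le> L} = {..L - f}"
    using assms by auto
  also have "(\<Sum>i\<le>L - f. of_nat M * cnj w ^ i * w ^ (f + i)) = (\<Sum>i\<le>L - f. of_nat M * w ^ f * q ^ i)"
    by (simp add: q power_add power_mult_distrib mult_ac)
  also have "(1 - q) * \<dots> = of_nat M * w ^ f * (1 - q ^ Suc (L - f))"
    by (simp only: sum_distrib_left[symmetric] sum_gp_basic mult.left_commute[of "1 - q"])
  finally show ?thesis
    by (simp add: M_def \<zeta>_def q_def)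
qed

lemma sum_disc_kernel:
  "(\<Sum>k<2 * L + 1. disc_kernel L w k) = real (2 * L + 1) * (1 - (cmod w)\<^sup>2 ^ Suc L)"
proof -
  have "complex_of_real (\<Sum>k<2 * L + 1. disc_kernel L w k)
      = of_real (real (2 * L + 1) * (1 - (cmod w)\<^sup>2 ^ Suc L))"
    using disc_kernel_moment[of 0 L w] by simp
  then show ?thesis
    by (simp only: of_real_eq_iff)
qed

lemma sum_cscale_power_eq_kernel_average:
  fixes v :: "'i \<Rightarrow> 'a::cstar_algebra_1"
  assumes "\<And>j. j \<in> I \<Longrightarrow> e j \<le> L"
  shows "(\<Sum>j\<in>I. cscale (w ^ e j) (v j))
       = (\<Sum>k<2 * L + 1. cscale (of_real (disc_kernel L w k / real (2 * L + 1)))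
            (\<Sum>j\<in>I. cscale (root_unity (2 * L + 1) k ^ e j) (v j)))
         + (\<Sum>j\<in>I. cscale (w ^ e j * of_real ((cmod w)\<^sup>2) ^ Suc (L - e j)) (v j))"
proof -
  define M where "M = 2 * L + 1"
  have "M \<noteq> 0"
    by (simp add: M_def)
  then have M0: "of_nat M \<noteq> (0::complex)"
    by simp
  have "(\<Sum>k<M. cscale (of_real (disc_kernel L w k / real M))
            (\<Sum>j\<in>I. cscale (root_unity M k ^ e j) (v j)))
      = (\<Sum>j\<in>I. cscale ((\<Sum>k<M. root_unity M k ^ e j * of_real (disc_kernel L w k)) / of_nat M) (v j))"
    by (simp add: cscale_sum_right cscale_sum_left cscale_cscale sum_divide_distrib mult_ac
        sum.swap[of _ "{..<M}"])
  also have "\<dots> = (\<Sum>j\<in>I. cscale (w ^ e j * (1 - of_real ((cmod w)\<^sup>2) ^ Suc (L - e j))) (v j))"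
  proof (intro sum.cong refl)
    fix j assume "j \<in> I"
    then show "cscale ((\<Sum>k<M. root_unity M k ^ e j * of_real (disc_kernel L w k)) / of_nat M) (v j)
        = cscale (w ^ e j * (1 - of_real ((cmod w)\<^sup>2) ^ Suc (L - e j))) (v j)"
      using disc_kernel_moment[OF assms, folded M_def] M0 by (simp del: of_real_power)
  qed
  finally show ?thesis
    by (simp add: right_diff_distrib cscale_diff_left sum_subtractf M_def)
qed

lemma norm_sum_cscale_le_of_mass:
  fixes x :: "'i \<Rightarrow> 'a::cstar_algebra_1"
  assumes "\<And>k. k \<in> A \<Longrightarrow> 0 \<le> p k" and "sum p A \<le> 1" and "0 \<le> S"
    and "\<And>k. k \<in> A \<Longrightarrow> norm (x k) \<le> S"
  shows "norm (\<Sum>k\<in>A. cscale (of_real (p k)) (x k)) \<le> S"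
proof -
  have "norm (\<Sum>k\<in>A. cscale (of_real (p k)) (x k)) \<le> (\<Sum>k\<in>A. p k * S)"
    using assms by (intro order.trans[OF norm_sum] sum_mono) (simp add: norm_cscale mult_left_mono)
  also have "\<dots> \<le> S"
    using mult_right_mono[OF assms(2,3)] by (simp flip: sum_distrib_right)
  finally show ?thesis .
qed

lemma norm_sum_cscale_power_le_on_disc_approx:
  fixes v :: "'i \<Rightarrow> 'a::cstar_algebra_1"
  assumes e: "\<And>j. j \<in> I \<Longrightarrow> e j \<le> L" and w: "cmod w \<le> 1"
    and circle: "\<And>\<zeta>. cmod \<zeta> = 1 \<Longrightarrow> norm (\<Sum>j\<in>I. cscale (\<zeta> ^ e j) (v j)) \<le> S"
  shows "norm (\<Sum>j\<in>I. cscale (w ^ e j) (v j)) \<le> S + cmod w ^ L * (\<Sum>j\<in>I. norm (v j))"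
proof -
  define M where "M = 2 * L + 1"
  define K where "K k = disc_kernel L w k / real M" for k
  have K_nonneg: "0 \<le> K k" for k
    using disc_kernel_nonneg[OF w] by (simp add: K_def)
  have "0 \<le> S"
    using order_trans[OF norm_ge_zero circle[of 1]] by simp
  have "(\<Sum>k<M. K k) = 1 - (cmod w)\<^sup>2 ^ Suc L"
    unfolding K_def M_def sum_divide_distrib[symmetric] sum_disc_kernel by simp
  then have mass: "(\<Sum>k<M. K k) \<le> 1"
    by simp
  have average: "norm (\<Sum>k<M. cscale (of_real (K k))
      (\<Sum>j\<in>I. cscale (root_unity M k ^ e j) (v j))) \<le> S"
    using K_nonneg mass \<open>0 \<le> S\<close> circle by (intro norm_sum_cscale_le_of_mass) auto
  have "norm (cscale (w ^ e j * of_real ((cmod w)\<^sup>2) ^ Suc (L - e j)) (v j))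
      \<le> cmod w ^ L * norm (v j)" if "j \<in> I" for j
  proof -
    have "cmod w ^ e j * ((cmod w)\<^sup>2) ^ Suc (L - e j) = cmod w ^ (e j + 2 * Suc (L - e j))"
      by (simp add: power_add power_mult power2_eq_square)
    also have "\<dots> \<le> cmod w ^ L"
      using e[OF that] w by (intro power_decreasing) auto
    finally show ?thesis
      by (simp add: norm_cscale norm_mult norm_power mult_right_mono)
  qed
  then have error: "norm (\<Sum>j\<in>I. cscale (w ^ e j * of_real ((cmod w)\<^sup>2) ^ Suc (L - e j)) (v j))
      \<le> cmod w ^ L * (\<Sum>j\<in>I. norm (v j))"
    by (intro order.trans[OF norm_sum]) (simp add: sum_distrib_left sum_mono)
  have "(\<Sum>j\<in>I. cscale (w ^ e j) (v j))
      = (\<Sum>k<M. cscale (of_real (K k)) (\<Sum>j\<in>I. cscale (root_unity M k ^ e j) (v j)))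
        + (\<Sum>j\<in>I. cscale (w ^ e j * of_real ((cmod w)\<^sup>2) ^ Suc (L - e j)) (v j))"
    unfolding K_def M_def by (rule sum_cscale_power_eq_kernel_average[OF e])
  then show ?thesis
    using order.trans[OF norm_triangle_ineq add_mono[OF average error]] by simp
qed

lemma norm_sum_cscale_power_le_on_disc:
  fixes v :: "'i \<Rightarrow> 'a::cstar_algebra_1"
  assumes "finite I" and w: "cmod w \<le> 1"
    and circle: "\<And>\<zeta>. cmod \<zeta> = 1 \<Longrightarrow> norm (\<Sum>j\<in>I. cscale (\<zeta> ^ e j) (v j)) \<le> S"
  shows "norm (\<Sum>j\<in>I. cscale (w ^ e j) (v j)) \<le> S"
proof (cases "cmod w = 1")
  case False
  with w have "cmod w < 1" by simp
  define C where "C = (\<Sum>j\<in>I. norm (v j))"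
  have lim: "(\<lambda>L. S + cmod w ^ L * C) \<longlonglongrightarrow> S + 0 * C"
    using \<open>cmod w < 1\<close> by (intro tendsto_intros LIMSEQ_power_zero) simp
  have "\<forall>\<^sub>F L in sequentially. norm (\<Sum>j\<in>I. cscale (w ^ e j) (v j)) \<le> S + cmod w ^ L * C"
    using eventually_ge_at_top[of "\<Sum>j\<in>I. e j"]
  proof eventually_elim
    case (elim L)
    then have "e j \<le> L" if "j \<in> I" for j
      using member_le_sum[OF that _ \<open>finite I\<close>, of e] by simp
    then show ?case
      unfolding C_def using norm_sum_cscale_power_le_on_disc_approx[OF _ w circle] by blast
  qed
  from tendsto_le[OF trivial_limit_sequentially lim tendsto_const this] show ?thesis
    by simp
qed (use circle in blast)

section \<open>Bernstein's inequality at the centre of an interval\<close>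

lemma joukowski_preimage_in_disc:
  "\<exists>w. w \<noteq> 0 \<and> cmod w \<le> 1 \<and> w + inverse w = 2 * u \<and> 1 - cmod w \<le> 2 * cmod u"
proof -
  define s where "s = csqrt (u\<^sup>2 - 1)"
  have prod: "(u + s) * (u - s) = 1"
    by (simp add: s_def algebra_simps flip: power2_eq_square)
  then have inv: "inverse (u + s) = u - s" "inverse (u - s) = u + s"
    by (simp_all add: inverse_unique mult.commute)
  have "cmod (u + s) * cmod (u - s) = 1"
    using prod by (metis norm_mult norm_one)
  then have "cmod (u + s) \<le> 1 \<or> cmod (u - s) \<le> 1"
    using less_1_mult[of "cmod (u + s)" "cmod (u - s)"] by linarith
  moreover have "u + s \<noteq> 0" "u - s \<noteq> 0"
    using prod by auto
  moreover have "(u + s) + (u - s) = 2 * u" "(u - s) + (u + s) = 2 * u"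
    by simp_all
  ultimately obtain w where w: "w \<noteq> 0" "cmod w \<le> 1" "w + inverse w = 2 * u"
    using inv by metis
  have "1 - cmod w \<le> 1 / cmod w - cmod w"
    using w by (simp add: le_divide_eq)
  also have "\<dots> = cmod (inverse w) - cmod w"
    by (simp add: norm_inverse divide_inverse)
  also have "\<dots> \<le> cmod (w + inverse w)"
    by (metis add.commute norm_diff_ineq)
  finally show ?thesis
    using w by (auto simp: norm_mult)
qed

lemma power_mult_joukowski_power:
  fixes w :: complex
  assumes "w \<noteq> 0" and "n \<le> N"
  shows "w ^ N * (of_real R * (w + inverse w) / 2) ^ n
       = (\<Sum>j\<le>n. w ^ (N - n + 2 * j) * of_real ((R / 2) ^ n * real (n choose j)))"
proof -
  have cancel: "w ^ N * (w ^ j * inverse w ^ (n - j)) = w ^ (N - n + 2 * j)" if "j \<le> n" for j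
  proof -
    have "N + j = (N - n + 2 * j) + (n - j)"
      using that assms(2) by arith
    then have "w ^ N * w ^ j = w ^ (N - n + 2 * j) * w ^ (n - j)"
      by (metis power_add)
    then show ?thesis
      using assms(1) by (simp add: power_inverse divide_inverse[symmetric] divide_eq_eq mult.assoc)
  qed
  have "w ^ N * (of_real R * (w + inverse w) / 2) ^ n
      = of_real ((R / 2) ^ n) * (\<Sum>j\<le>n. of_nat (n choose j) * (w ^ N * (w ^ j * inverse w ^ (n - j))))"
    by (simp add: binomial_ring power_mult_distrib power_divide sum_distrib_left sum_divide_distrib mult_ac)
  also have "\<dots> = (\<Sum>j\<le>n. of_real ((R / 2) ^ n) * (of_nat (n choose j) * w ^ (N - n + 2 * j)))"
    unfolding sum_distrib_left by (intro sum.cong refl) (simp add: cancel)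
  also have "\<dots> = (\<Sum>j\<le>n. w ^ (N - n + 2 * j) * of_real ((R / 2) ^ n * real (n choose j)))"
    by (simp add: mult_ac)
  finally show ?thesis .
qed

lemma vpoly_joukowski_eq:
  fixes c :: "nat \<Rightarrow> 'a::cstar_algebra_1"
  assumes "w \<noteq> 0"
  shows "cscale (w ^ N) (vpoly c N (of_real R * (w + inverse w) / 2))
       = (\<Sum>(n, j)\<in>Sigma {..N} (\<lambda>n. {..n}).
            cscale (w ^ (N - n + 2 * j)) (cscale (of_real ((R / 2) ^ n * real (n choose j))) (c n)))"
  using assms
  by (simp add: vpoly_def cscale_sum_right cscale_sum_left cscale_cscale power_mult_joukowski_power
      sum.Sigma[symmetric] del: of_real_mult of_real_power)

lemma norm_vpoly_joukowski_le:
  fixes c :: "nat \<Rightarrow> 'a::cstar_algebra_1"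
  assumes "0 \<le> R" and interval: "\<And>t. \<bar>t\<bar> \<le> R \<Longrightarrow> norm (vpoly c N (of_real t)) \<le> S"
    and "w \<noteq> 0" and "cmod w \<le> 1"
  shows "cmod w ^ N * norm (vpoly c N (of_real R * (w + inverse w) / 2)) \<le> S"
proof -
  define e where "e = (\<lambda>(n, j). N - n + 2 * j)"
  define v where "v = (\<lambda>(n, j). cscale (of_real ((R / 2) ^ n * real (n choose j))) (c n))"
  define I where "I = Sigma {..N} (\<lambda>n. {..n})"
  have expand: "cscale (u ^ N) (vpoly c N (of_real R * (u + inverse u) / 2))
      = (\<Sum>p\<in>I. cscale (u ^ e p) (v p))" if "u \<noteq> 0" for u
    unfolding vpoly_joukowski_eq[OF that] I_def by (intro sum.cong refl) (auto simp: e_def v_def)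
  have circle: "norm (\<Sum>p\<in>I. cscale (\<eta> ^ e p) (v p)) \<le> S" if "cmod \<eta> = 1" for \<eta>
  proof -
    have "\<eta> \<noteq> 0" and "inverse \<eta> = cnj \<eta>"
      using that by (auto simp: inverse_eq_divide divide_conv_cnj)
    then have "(\<Sum>p\<in>I. cscale (\<eta> ^ e p) (v p)) = cscale (\<eta> ^ N) (vpoly c N (of_real (R * Re \<eta>)))"
      by (simp add: expand[symmetric] complex_add_cnj)
    moreover have "\<bar>R * Re \<eta>\<bar> \<le> R"
      using abs_Re_le_cmod[of \<eta>] that \<open>0 \<le> R\<close> by (simp add: abs_mult mult_left_le)
    ultimately show ?thesis
      using interval[of "R * Re \<eta>"] that by (simp add: norm_cscale norm_power)
  qed
  have "finite I"
    by (simp add: I_def)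
  from norm_sum_cscale_power_le_on_disc[OF this \<open>cmod w \<le> 1\<close> circle]
  have "norm (\<Sum>p\<in>I. cscale (w ^ e p) (v p)) \<le> S" .
  then show ?thesis
    unfolding expand[OF \<open>w \<noteq> 0\<close>, symmetric] norm_cscale norm_power .
qed

lemma norm_vpoly_le_on_small_disc:
  fixes c :: "nat \<Rightarrow> 'a::cstar_algebra_1"
  assumes "1 \<le> N" and "0 < R" and interval: "\<And>t. \<bar>t\<bar> \<le> R \<Longrightarrow> norm (vpoly c N (of_real t)) \<le> S"
    and z: "cmod z \<le> R / (4 * real N)"
  shows "norm (vpoly c N z) \<le> 2 * S"
proof -
  obtain w where w: "w \<noteq> 0" "cmod w \<le> 1" "w + inverse w = 2 * (z / of_real R)"
    and gap: "1 - cmod w \<le> 2 * cmod (z / of_real R)"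
    using joukowski_preimage_in_disc by blast
  have "of_real R * (w + inverse w) / 2 = z"
    using w(3) \<open>0 < R\<close> by simp
  with norm_vpoly_joukowski_le[OF less_imp_le[OF \<open>0 < R\<close>] interval w(1,2)]
  have bound: "cmod w ^ N * norm (vpoly c N z) \<le> S"
    by simp
  have "2 * cmod (z / of_real R) \<le> 1 / (2 * real N)"
    using z \<open>0 < R\<close> \<open>1 \<le> N\<close> by (simp add: norm_divide field_simps)
  with gap have "1 + real N * (- (1 / (2 * real N))) \<le> 1 + real N * (cmod w - 1)"
    using \<open>1 \<le> N\<close> by (intro add_left_mono mult_left_mono) auto
  also have "\<dots> \<le> (1 + (cmod w - 1)) ^ N"
    by (rule Bernoulli_inequality) simp
  finally have "1 / 2 \<le> cmod w ^ N"
    using \<open>1 \<le> N\<close> by simp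
  then have "1 / 2 * norm (vpoly c N z) \<le> cmod w ^ N * norm (vpoly c N z)"
    by (rule mult_right_mono) simp
  with bound show ?thesis
    by simp
qed

lemma norm_vpoly_coeff1_le:
  fixes c :: "nat \<Rightarrow> 'a::cstar_algebra_1"
  assumes "1 \<le> N" and "0 < R" and interval: "\<And>t. \<bar>t\<bar> \<le> R \<Longrightarrow> norm (vpoly c N (of_real t)) \<le> S"
  shows "norm (c 1) \<le> 8 * real N * S / R"
proof -
  define r where "r = R / (4 * real N)"
  have "cmod (of_real r * \<zeta>) \<le> R / (4 * real N)" if "cmod \<zeta> = 1" for \<zeta>
    using that assms by (simp add: r_def norm_mult del: of_real_divide)
  then have "cmod (of_real r) ^ 1 * norm (c 1) \<le> 2 * S"
    using assms by (intro norm_vpoly_coeff_le norm_vpoly_le_on_small_disc) auto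
  moreover have "0 < r"
    using assms by (simp add: r_def)
  ultimately have "norm (c 1) \<le> 2 * S / r"
    by (simp add: field_simps)
  also have "\<dots> = 8 * real N * S / R"
    using assms by (simp add: r_def field_simps)
  finally show ?thesis .
qed

lemma power_div_fact_le_exp: "0 \<le> x \<Longrightarrow> x ^ n / fact n \<le> exp (x::real)"
  using sum_le_suminf[OF summable_exp_generic[of x], of "{n}"]
  by (simp add: exp_def divide_inverse mult.commute)

lemma power_div_fact_le_geometric:
  assumes "0 \<le> x" and "x \<le> real n / 4"
  shows "x ^ n / fact n \<le> (3 / 4 :: real) ^ n"
proof -
  have "x ^ n / fact n \<le> (real n / 4) ^ n / fact n"
    using assms by (intro divide_right_mono power_mono) auto
  also have "\<dots> = (real n ^ n / fact n) / 4 ^ n"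
    by (simp add: power_divide)
  also have "\<dots> \<le> exp (real n) / 4 ^ n"
    by (intro divide_right_mono power_div_fact_le_exp) auto
  also have "\<dots> = (exp 1 / 4) ^ n"
    by (simp add: power_divide flip: exp_of_nat_mult)
  also have "\<dots> \<le> (3 / 4) ^ n"
    using exp_le by (intro power_mono divide_right_mono) auto
  finally show ?thesis .
qed

lemma norm_partial_sum_le_of_sums:
  fixes T :: "nat \<Rightarrow> 'a::banach"
  assumes "T sums f" and "0 \<le> q" "q < 1" and tail: "\<And>n. N < n \<Longrightarrow> norm (T n) \<le> q ^ n"
  shows "norm (\<Sum>n\<le>N. T n) \<le> norm f + 1 / (1 - q)"
proof -
  have "(\<lambda>i. T (i + Suc N)) sums (f - (\<Sum>n<Suc N. T n))"
    unfolding sums_iff_shift[of T "Suc N"] using assms(1) by (simp only: diff_add_cancel)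
  then have "f - (\<Sum>n\<le>N. T n) = (\<Sum>i. T (i + Suc N))"
    by (simp add: sums_unique lessThan_Suc_atMost)
  moreover have "norm (T (i + Suc N)) \<le> q ^ i" for i
    using tail[of "i + Suc N"] power_decreasing[of i "i + Suc N" q] assms(2,3) by simp
  then have "norm (\<Sum>i. T (i + Suc N)) \<le> (\<Sum>i. q ^ i)"
    by (rule norm_suminf_le) (use assms(2,3) in simp)
  ultimately have "norm (f - (\<Sum>n\<le>N. T n)) \<le> (\<Sum>i. q ^ i)"
    by simp
  also have "\<dots> = 1 / (1 - q)"
    using assms(2,3) by (simp add: suminf_geometric)
  finally show ?thesis
    using norm_triangle_sub[of "\<Sum>n\<le>N. T n" f] by (simp add: norm_minus_commute)
qed

lemma norm_taylor_vpoly_exp_le: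
  fixes a b :: "'a::cstar_algebra_1"
  assumes "selfadjoint a" and "selfadjoint b" and "0 < \<epsilon>"
    and Cpow_le: "\<And>n. N < n \<Longrightarrow> norm (Cpow a b n) \<le> \<epsilon> ^ n"
    and t: "\<bar>t\<bar> \<le> real N / (4 * \<epsilon>)"
  shows "norm (vpoly (\<lambda>n. cscale (\<i> ^ n / fact n) (Cpow a b n)) N (of_real t)) \<le> 5"
proof -
  define T where "T n = cscale ((\<i> * of_real t) ^ n / fact n) (Cpow a b n)" for n
  let ?f = "exp (cscale (\<i> * of_real t) a) * exp (cscale (- (\<i> * of_real t)) b)"
  have sums: "T sums ?f"
    unfolding T_def by (rule exp_cscale_mult_exp_cscale_sums)
  have unitary: "norm ?f = 1"
    using assms(1,2) by (intro norm_exp_mult_exp_skew adj_cscale_imaginary_selfadjoint) simp_all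
  have "norm (T n) \<le> (3 / 4) ^ n" if "N < n" for n
  proof -
    have "norm (T n) = \<bar>t\<bar> ^ n / fact n * norm (Cpow a b n)"
      by (simp add: T_def norm_cscale norm_mult norm_power norm_divide)
    also have "\<dots> \<le> \<bar>t\<bar> ^ n / fact n * \<epsilon> ^ n"
      using Cpow_le[OF that] by (intro mult_left_mono) auto
    also have "\<dots> = (\<bar>t\<bar> * \<epsilon>) ^ n / fact n"
      by (simp add: power_mult_distrib)
    also have "\<dots> \<le> (3 / 4) ^ n"
    proof (rule power_div_fact_le_geometric)
      have "\<bar>t\<bar> * \<epsilon> \<le> real N / 4"
        using t \<open>0 < \<epsilon>\<close> by (simp add: field_simps)
      then show "\<bar>t\<bar> * \<epsilon> \<le> real n / 4"
        using that by linarith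
    qed (use \<open>0 < \<epsilon>\<close> in simp)
    finally show ?thesis .
  qed
  then have "norm (\<Sum>n\<le>N. T n) \<le> norm ?f + 1 / (1 - 3 / 4)"
    by (intro norm_partial_sum_le_of_sums[OF sums]) auto
  moreover have "vpoly (\<lambda>n. cscale (\<i> ^ n / fact n) (Cpow a b n)) N (of_real t) = (\<Sum>n\<le>N. T n)"
    by (simp add: vpoly_def T_def cscale_cscale power_mult_distrib mult.commute)
  ultimately show ?thesis
    using unitary by simp
qed

lemma norm_diff_le_of_norm_Cpow_le:
  fixes a b :: "'a::cstar_algebra_1"
  assumes "selfadjoint a" and "selfadjoint b" and "0 < \<epsilon>" and "1 \<le> N"
    and "\<And>n. N < n \<Longrightarrow> norm (Cpow a b n) \<le> \<epsilon> ^ n"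
  shows "norm (a - b) \<le> 160 * \<epsilon>"
proof -
  have "norm (a - b) = norm (cscale (\<i> ^ 1 / fact 1) (Cpow a b 1))"
    by (simp only: Cpow_1 norm_cscale) simp
  also have "\<dots> \<le> 8 * real N * 5 / (real N / (4 * \<epsilon>))"
    using assms by (intro norm_vpoly_coeff1_le norm_taylor_vpoly_exp_le) auto
  also have "\<dots> = 160 * \<epsilon>"
    using assms by (simp add: field_simps)
  finally show ?thesis .
qed

lemma eventually_norm_Cpow_le:
  assumes "rho a b < ereal \<epsilon>"
  shows "\<forall>\<^sub>F n in sequentially. norm (Cpow a b n) \<le> \<epsilon> ^ n"
proof -
  have "\<forall>\<^sub>F n in sequentially. root n (norm (Cpow a b n)) < \<epsilon>"
    using Limsup_lessD[OF assms[unfolded rho_def]] by simp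
  with eventually_gt_at_top[of 0] show ?thesis
  proof eventually_elim
    case (elim n)
    then have "norm (Cpow a b n) = root n (norm (Cpow a b n)) ^ n"
      by simp
    also have "\<dots> \<le> \<epsilon> ^ n"
      using elim by (intro power_mono) auto
    finally show ?case .
  qed
qed

theorem corollary3p1:
  fixes a b :: "'a::cstar_algebra_1"
  assumes "selfadjoint a" and "selfadjoint b"
  shows "a = b \<longleftrightarrow> rho a b = 0"
proof
  assume "a = b"
  then show "rho a b = 0"
    by (simp add: rho_self)
next
  assume "rho a b = 0"
  have "norm (a - b) \<le> 0 + \<epsilon>" if "0 < \<epsilon>" for \<epsilon>
  proof -
    have "rho a b < ereal (\<epsilon> / 160)"
      using \<open>rho a b = 0\<close> that by simp
    from eventually_norm_Cpow_le[OF this] obtain N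
      where "\<And>n. N \<le> n \<Longrightarrow> norm (Cpow a b n) \<le> (\<epsilon> / 160) ^ n"
      by (auto simp: eventually_sequentially)
    with assms that have "norm (a - b) \<le> 160 * (\<epsilon> / 160)"
      by (intro norm_diff_le_of_norm_Cpow_le[where N = "Suc N"]) auto
    then show ?thesis
      by simp
  qed
  then show "a = b"
    using field_le_epsilon[of "norm (a - b)" 0] by simp
qed

end
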